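(* Let $\Theta\subseteq\mathbb{R}^p$ be open and $\mathcal{P}=\{P_\theta:\theta\in\Theta\}\subseteq\mathcal{P}_{2,\mathrm{ac}}(\mathbb{R})$, and let $F_\theta^{-1}$ be the quantile function of $P_\theta$. Then $\mathcal{P}$ is DWS at $\theta\in\Theta$ if and only if $\nabla_\theta F_\theta^{-1}(\cdot)$ exists and lies in $L^2([0,1];\mathbb{R}^p)$, in which case the Wasserstein information matrix is $J(\theta)=\int_0^1\nabla_\theta F_\theta^{-1}(u)\,(\nabla_\theta F_\theta^{-1}(u))^\top\,\mathrm{d}u$.
   Context: $\mathcal{P}_{2,\mathrm{ac}}(\mathbb{R})$: probability measures on $\mathbb{R}$ with finite second moment and Lebesgue density; $\mathbf{t}_{\mu\to\nu}$: quadratic-cost optimal transport map. The model is DWS at $\theta$ if there is $\Phi_\theta:\mathbb{R}\to\mathbb{R}^{1\times p}$ (transport linearization) with $\int|\mathbf{t}_{P_\theta\to P_{\theta+th}}(x)-x-t\Phi_\theta(x)h|^2\,\mathrm{d}P_\theta(x)=o(t^2)$ as $t\to0$ for every $h\in\mathbb{R}^p$, and then $J(\theta)=\mathbb{E}_\theta[\Phi_\theta(X)^\top\Phi_\theta(X)]\in\mathbb{R}^{p\times p}$. *)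

theory Defs
  imports "HOL-Analysis.Analysis" "HOL-Probability.Probability"
begin

definition P2ac :: "real measure \<Rightarrow> bool" where
  "P2ac \<mu> \<longleftrightarrow> prob_space \<mu> \<and> sets \<mu> = sets borel \<and>
     (\<exists>f :: real \<Rightarrow> ennreal. f \<in> borel_measurable borel \<and> \<mu> = density lborel f) \<and>
     integrable \<mu> (\<lambda>x. x\<^sup>2)"

definition is_ot_map :: "real measure \<Rightarrow> real measure \<Rightarrow> (real \<Rightarrow> real) \<Rightarrow> bool" where
  "is_ot_map \<mu> \<nu> T \<longleftrightarrow> T \<in> borel_measurable \<mu> \<and> distr \<mu> borel T = \<nu> \<and>
     (\<forall>S. S \<in> borel_measurable \<mu> \<longrightarrow> distr \<mu> borel S = \<nu> \<longrightarrow>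
        (\<integral>\<^sup>+x. ennreal ((T x - x)\<^sup>2) \<partial>\<mu>) \<le> (\<integral>\<^sup>+x. ennreal ((S x - x)\<^sup>2) \<partial>\<mu>))"

definition transport_linearization ::
  "('p::finite) itself \<Rightarrow> (real^'p) set \<Rightarrow> (real^'p \<Rightarrow> real measure) \<Rightarrow> real^'p \<Rightarrow> (real \<Rightarrow> real^'p) \<Rightarrow> bool" where
  "transport_linearization _ \<Theta> P \<theta> \<Phi> \<longleftrightarrow> \<Phi> \<in> borel_measurable borel \<and>
     (\<forall>h::real^'p. \<forall>T::real \<Rightarrow> real \<Rightarrow> real.
        (\<forall>t. \<theta> + t *\<^sub>R h \<in> \<Theta> \<longrightarrow> is_ot_map (P \<theta>) (P (\<theta> + t *\<^sub>R h)) (T t)) \<longrightarrow>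
        (\<forall>\<epsilon>>0. eventually (\<lambda>t. (\<integral>\<^sup>+x. ennreal ((T t x - x - t * (\<Phi> x \<bullet> h))\<^sup>2) \<partial>P \<theta>)
                                  \<le> ennreal (\<epsilon> * t\<^sup>2)) (at 0)))"

definition DWS :: "(real^'p::finite) set \<Rightarrow> (real^'p \<Rightarrow> real measure) \<Rightarrow> real^'p \<Rightarrow> bool" where
  "DWS \<Theta> P \<theta> \<longleftrightarrow> (\<exists>\<Phi>. transport_linearization TYPE('p) \<Theta> P \<theta> \<Phi>)"

definition wass_info :: "real measure \<Rightarrow> (real \<Rightarrow> real^'p::finite) \<Rightarrow> real^'p^'p" where
  "wass_info \<mu> \<Phi> = (\<chi> i j. \<integral>x. \<Phi> x $ i * \<Phi> x $ j \<partial>\<mu>)"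

definition quantile :: "real measure \<Rightarrow> real \<Rightarrow> real" where
  "quantile \<mu> u = Inf {x. u \<le> cdf \<mu> x}"

definition quantile_gradient ::
  "(real^'p::finite \<Rightarrow> real measure) \<Rightarrow> real^'p \<Rightarrow> (real \<Rightarrow> real^'p) \<Rightarrow> bool" where
  "quantile_gradient P \<theta> G \<longleftrightarrow> G \<in> borel_measurable borel \<and>
     (\<integral>\<^sup>+u\<in>{0..1}. ennreal ((norm (G u))\<^sup>2) \<partial>lborel) < \<infinity> \<and>
     (\<forall>h::real^'p. \<forall>\<epsilon>>0. eventually (\<lambda>t.
        (\<integral>\<^sup>+u\<in>{0<..<1}. ennreal ((quantile (P (\<theta> + t *\<^sub>R h)) u - quantile (P \<theta>) u - t * (G u \<bullet> h))\<^sup>2) \<partial>lborel)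
          \<le> ennreal (\<epsilon> * t\<^sup>2)) (at 0))"

end

(*
  On the quantile scale everything is linear. For an atomless distribution mu, Lebesgue measure
  on (0,1) is pushed to mu by the quantile function F_mu^-1, and the monotone rearrangement
  F_nu^-1 o F_mu is an optimal transport map from mu to nu; by a one-dimensional Brenier argument
  every optimal map agrees with it mu-almost everywhere. Substituting x = F_theta^-1(u), the
  transport residual of a candidate Phi along theta + t h therefore equals
    int_0^1 |F_(theta+th)^-1(u) - F_theta^-1(u) - t Phi(F_theta^-1(u)) h|^2 du,
  so Phi is a transport linearization iff Phi o F_theta^-1 is the L^2 derivative of the quantile
  functions, and conversely G o F_theta is a transport linearization for every L^2 gradient G.
  L^2 derivatives are unique almost everywhere, so Phi o F_theta^-1 = G a.e., and J(theta) is
  obtained by the same substitution.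
*)

theory Submission
  imports Defs
begin

lemma square_diff_le: "(x - y)\<^sup>2 \<le> 2 * x\<^sup>2 + 2 * (y::real)\<^sup>2"
  using sum_squares_bound[of x "-y"] by (simp add: power2_diff)

lemma integrable_square_diff:
  fixes f g :: "'a \<Rightarrow> real"
  assumes [measurable]: "f \<in> borel_measurable M" "g \<in> borel_measurable M"
    and "integrable M (\<lambda>x. (f x)\<^sup>2)" "integrable M (\<lambda>x. (g x)\<^sup>2)"
  shows "integrable M (\<lambda>x. (f x - g x)\<^sup>2)"
proof (rule Bochner_Integration.integrable_bound)
  show "integrable M (\<lambda>x. 2 * (f x)\<^sup>2 + 2 * (g x)\<^sup>2)"
    using assms(3,4) by simp
  show "AE x in M. norm ((f x - g x)\<^sup>2) \<le> norm (2 * (f x)\<^sup>2 + 2 * (g x)\<^sup>2)"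
    using square_diff_le by (intro AE_I2) simp
qed measurable

lemma integral_mono_on_lower_bound:
  fixes f :: "real \<Rightarrow> real"
  assumes f: "mono_on {c..d} f" and m: "c \<le> m" "m \<le> d"
  shows "(m - c) * f c + (d - m) * f m \<le> integral {c..d} f"
proof -
  have fcd: "f integrable_on {c..d}"
    using f by (rule integrable_on_mono_on)
  have "integral {c..m} (\<lambda>_. f c) \<le> integral {c..m} f"
    by (rule integral_le) (use m in \<open>auto intro: mono_onD[OF f] integrable_on_subinterval[OF fcd]\<close>)
  moreover have "integral {m..d} (\<lambda>_. f m) \<le> integral {m..d} f"
    by (rule integral_le) (use m in \<open>auto intro: mono_onD[OF f] integrable_on_subinterval[OF fcd]\<close>)
  ultimately show ?thesis
    using Henstock_Kurzweil_Integration.integral_combine[OF m fcd] m by simp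
qed

lemma integral_mono_on_upper_bound:
  fixes f :: "real \<Rightarrow> real"
  assumes f: "mono_on {c..d} f" and m: "c \<le> m" "m \<le> d"
  shows "integral {c..d} f \<le> (m - c) * f m + (d - m) * f d"
proof -
  have fcd: "f integrable_on {c..d}"
    using f by (rule integrable_on_mono_on)
  have "integral {c..m} f \<le> integral {c..m} (\<lambda>_. f m)"
    by (rule integral_le) (use m in \<open>auto intro: mono_onD[OF f] integrable_on_subinterval[OF fcd]\<close>)
  moreover have "integral {m..d} f \<le> integral {m..d} (\<lambda>_. f d)"
    by (rule integral_le) (use m in \<open>auto intro: mono_onD[OF f] integrable_on_subinterval[OF fcd]\<close>)
  ultimately show ?thesis
    using Henstock_Kurzweil_Integration.integral_combine[OF m fcd] m by simp
qed

lemma power2_norm_vec: "(norm (x::real^'n))\<^sup>2 = (\<Sum>i\<in>UNIV. (x $ i)\<^sup>2)"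
  unfolding power2_norm_eq_inner inner_vec_def by (simp add: power2_eq_square)

lemma borel_measurable_vec_nth [measurable (raw)]:
  "f \<in> borel_measurable M \<Longrightarrow> (\<lambda>x. f x $ i :: real) \<in> borel_measurable M"
  using measurable_compose[OF _ borel_measurable_nth] .

lemma eventually_at_0_obtain_nonzero:
  assumes "\<forall>\<^sub>F t in at (0::real). P t"
  obtains t where "t \<noteq> 0" "P t"
  using eventually_happens'[OF at_neq_bot eventually_conj[OF eventually_neq_at_within assms]] by blast

definition lborel01 :: "real measure" where
  "lborel01 = restrict_space lborel {0<..<1}"

lemma space_lborel01 [simp]: "space lborel01 = {0<..<1}"
  by (simp add: lborel01_def space_restrict_space)

lemma sets_lborel01: "sets lborel01 = sets (restrict_space borel {0<..<1})"
  by (simp add: lborel01_def sets_restrict_space)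

lemma prob_space_lborel01: "prob_space lborel01"
  by (auto simp: lborel01_def emeasure_restrict_space space_restrict_space intro!: prob_spaceI)

lemma nn_integral_lborel01: "(\<integral>\<^sup>+u. f u \<partial>lborel01) = (\<integral>\<^sup>+u\<in>{0<..<1}. f u \<partial>lborel)"
  unfolding lborel01_def by (rule nn_integral_restrict_space) simp

lemma borel_measurable_lborel01:
  "f \<in> borel_measurable borel \<Longrightarrow> f \<in> borel_measurable lborel01"
  unfolding lborel01_def by (rule measurable_restrict_space1) simp

lemma AE_lborel01_neq: "AE u in lborel01. u \<noteq> c"
  unfolding lborel01_def
  by (subst AE_restrict_space_iff) (auto intro: AE_mp[OF AE_lborel_singleton[of c]])

lemma integral_restrict_Icc01_eq_lborel01:
  fixes g :: "real \<Rightarrow> real"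
  assumes "g \<in> borel_measurable borel"
  shows "integral\<^sup>L (restrict_space lborel {0..1}) g = integral\<^sup>L lborel01 g"
proof -
  have "integral\<^sup>L (restrict_space lborel {0..1}) g = (\<integral>x. indicator {0..1} x *\<^sub>R g x \<partial>lborel)"
    by (rule integral_restrict_space) simp
  also have "\<dots> = (\<integral>x. indicator {0<..<1} x *\<^sub>R g x \<partial>lborel)"
  proof (rule integral_cong_AE)
    show "AE x in lborel. indicator {0..1} x *\<^sub>R g x = indicator {0<..<1::real} x *\<^sub>R g x"
      using AE_lborel_singleton[of 0] AE_lborel_singleton[of 1]
      by eventually_elim (auto simp: indicator_def)
  qed (use assms in measurable)
  also have "\<dots> = integral\<^sup>L lborel01 g"
    unfolding lborel01_def by (rule integral_restrict_space[symmetric]) simp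
  finally show ?thesis .
qed

lemma nn_integral_Icc01_eq_Ioo01:
  "(\<integral>\<^sup>+u\<in>{0..1}. f u \<partial>lborel) = (\<integral>\<^sup>+u\<in>{0<..<1::real}. f u \<partial>lborel)"
proof (rule nn_integral_cong_AE)
  show "AE x in lborel. f x * indicator {0..1} x = f x * indicator {0<..<1} x"
    using AE_lborel_singleton[of 0] AE_lborel_singleton[of 1]
    by eventually_elim (auto simp: indicator_def)
qed

section \<open>Quantile representation\<close>

lemma (in real_distribution) borel_measurable_iff_borel:
  "f \<in> borel_measurable M \<longleftrightarrow> f \<in> borel_measurable borel"
  by (simp add: measurable_cong_sets[OF events_eq_borel refl])

context cdf_distribution
begin

lemma quantile_eq_I: "quantile M = I"
  by (simp add: quantile_def[abs_def])

lemma distr_quantile: "distr lborel01 borel (quantile M) = M"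
  unfolding lborel01_def quantile_eq_I by (rule distr_I_eq_M)

lemma measurable_quantile [measurable]: "quantile M \<in> borel_measurable lborel01"
  unfolding quantile_eq_I by (subst measurable_cong_sets[OF sets_lborel01 refl]) (rule measurable_CI)

lemma quantile_le_iff: "0 < u \<Longrightarrow> u < 1 \<Longrightarrow> quantile M u \<le> x \<longleftrightarrow> u \<le> cdf M x"
  unfolding quantile_eq_I using pseudoinverse by blast

lemma mono_on_quantile: "mono_on {0<..<1} (quantile M)"
  unfolding quantile_eq_I by (rule mono_I)

lemma nn_integral_quantile:
  "g \<in> borel_measurable borel \<Longrightarrow> (\<integral>\<^sup>+x. g x \<partial>M) = (\<integral>\<^sup>+u. g (quantile M u) \<partial>lborel01)"
  by (subst (1) distr_quantile[symmetric]) (simp add: nn_integral_distr)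

lemma integral_quantile:
  fixes g :: "real \<Rightarrow> real"
  shows "g \<in> borel_measurable borel \<Longrightarrow> (\<integral>x. g x \<partial>M) = (\<integral>u. g (quantile M u) \<partial>lborel01)"
  by (subst (1) distr_quantile[symmetric]) (simp add: integral_distr)

lemma integrable_quantile_iff:
  fixes g :: "real \<Rightarrow> real"
  shows "g \<in> borel_measurable borel \<Longrightarrow> integrable M g \<longleftrightarrow> integrable lborel01 (\<lambda>u. g (quantile M u))"
  by (subst (1) distr_quantile[symmetric]) (simp add: integrable_distr_eq)

lemma AE_quantile_iff:
  "{x. P x} \<in> sets borel \<Longrightarrow> (AE x in M. P x) \<longleftrightarrow> (AE u in lborel01. P (quantile M u))"
  by (subst (1) distr_quantile[symmetric]) (simp add: AE_distr_iff)

lemma distr_comp_quantile: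
  "S \<in> borel_measurable borel \<Longrightarrow> distr lborel01 borel (\<lambda>u. S (quantile M u)) = distr M borel S"
  by (subst (2) distr_quantile[symmetric]) (simp add: distr_distr comp_def)

lemma square_integrable_quantile:
  "integrable M (\<lambda>x. x\<^sup>2) \<Longrightarrow> integrable lborel01 (\<lambda>u. (quantile M u)\<^sup>2)"
  using integrable_quantile_iff[of "\<lambda>x. x\<^sup>2"] by simp

end

(* A flat piece of the cdf at level u contains a rational point, and only countably many levels
   are attained at rational points. *)
lemma (in cdf_distribution) AE_cdf_neq_right_of_quantile:
  "AE u in lborel01. \<forall>s > quantile M u. cdf M s \<noteq> u"
proof -
  have "AE u in lborel01. \<forall>q::rat. u \<noteq> cdf M (of_rat q)"
    by (subst AE_all_countable) (auto intro: AE_lborel01_neq)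
  then show ?thesis
  proof (rule AE_mp, intro AE_I2 impI allI)
    fix u s assume u: "u \<in> space lborel01" and no_rat: "\<forall>q::rat. u \<noteq> cdf M (of_rat q)"
      and s: "quantile M u < s"
    show "cdf M s \<noteq> u"
    proof
      assume "cdf M s = u"
      obtain r where r: "r \<in> \<rat>" "quantile M u < r" "r < s"
        using Rats_dense_in_real[OF s] by blast
      have "u \<le> cdf M r"
        using quantile_le_iff[of u r] u r by auto
      moreover have "cdf M r \<le> u"
        using cdf_nondecreasing[of r s] r \<open>cdf M s = u\<close> by simp
      ultimately show False
        using no_rat r(1) by (auto elim: Rats_cases)
    qed
  qed
qed

(* Outside (0,1) the quantile function takes junk values (Inf UNIV, Inf {}); they are replaced by 0
   so that quantile0 is Borel measurable on the whole line. *)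

definition quantile0 :: "real measure \<Rightarrow> real \<Rightarrow> real" where
  "quantile0 \<mu> u = (if u \<in> {0<..<1} then quantile \<mu> u else 0)"

lemma (in cdf_distribution) borel_measurable_quantile0 [measurable]:
  "quantile0 M \<in> borel_measurable borel"
  unfolding quantile0_def[abs_def]
proof (subst measurable_If_restrict_space_iff)
  have "{x. x \<in> {0<..<1::real}} = {0<..<1}"
    by auto
  then show "quantile M \<in> borel_measurable (restrict_space borel {x. x \<in> {0<..<1}}) \<and>
      (\<lambda>x. 0) \<in> borel_measurable (restrict_space borel {x. x \<notin> {0<..<1}})"
    using measurable_CI by (simp add: quantile_eq_I)
qed simp

locale atomless_distribution = cdf_distribution +
  assumes measure_singleton: "\<And>x. measure M {x} = 0"
begin

lemma isCont_cdf_atomless: "isCont (cdf M) x"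
  using isCont_cdf measure_singleton by blast

lemma cdf_quantile: "0 < u \<Longrightarrow> u < 1 \<Longrightarrow> cdf M (quantile M u) = u"
proof -
  assume u: "0 < u" "u < 1"
  have "(cdf M \<longlongrightarrow> cdf M (quantile M u)) (at_left (quantile M u))"
    using isCont_cdf_atomless by (simp add: isCont_def filterlim_at_split)
  moreover have "eventually (\<lambda>x. cdf M x \<le> u) (at_left (quantile M u))"
    unfolding eventually_at_left_field using quantile_le_iff[OF u]
    by (intro exI[of _ "quantile M u - 1"]) (simp, meson linorder_not_le order_less_imp_le)
  ultimately have "cdf M (quantile M u) \<le> u"
    by (rule tendsto_upperbound) simp
  moreover have "u \<le> cdf M (quantile M u)"
    using quantile_le_iff[OF u, of "quantile M u"] by simp
  ultimately show ?thesis
    by simp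
qed

lemma strict_mono_on_quantile: "strict_mono_on {0<..<1} (quantile M)"
proof (rule strict_mono_onI)
  fix u v :: real assume "u \<in> {0<..<1}" "v \<in> {0<..<1}" "u < v"
  then show "quantile M u < quantile M v"
    using mono_onD[OF mono_on_quantile, of u v] cdf_quantile[of u] cdf_quantile[of v]
    by (cases "quantile M u = quantile M v") auto
qed

end

lemma P2ac_atomless_distribution:
  assumes "P2ac \<mu>"
  shows "atomless_distribution \<mu>"
proof -
  obtain f where "f \<in> borel_measurable borel" "\<mu> = density lborel f"
    using assms unfolding P2ac_def by blast
  then have "emeasure \<mu> {x} = 0" for x
    by (simp add: emeasure_density nn_integral_null_set null_sets_def)
  moreover have "real_distribution \<mu>"
    using assms by (simp add: P2ac_def real_distribution_def real_distribution_axioms_def)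
  ultimately show ?thesis
    by (simp add: atomless_distribution_def atomless_distribution_axioms_def
        cdf_distribution_def measure_def)
qed

section \<open>Optimal transport on the line\<close>

locale monotone_transport = \<mu>: atomless_distribution \<mu> + \<nu>: atomless_distribution \<nu> for \<mu> \<nu> +
  assumes square_integrable_\<mu>: "integrable \<mu> (\<lambda>x. x\<^sup>2)"
    and square_integrable_\<nu>: "integrable \<nu> (\<lambda>x. x\<^sup>2)"
begin

abbreviation a where "a \<equiv> quantile \<mu>"
abbreviation b where "b \<equiv> quantile \<nu>"
abbreviation F where "F \<equiv> cdf \<nu>"

definition support_interval :: "real set" where
  "support_interval = {y. 0 < F y \<and> F y < 1}"

definition backward_map :: "real \<Rightarrow> real" where
  "backward_map y = a (F y)"

(* Brenier's convex potential of the transport from nu to mu: its derivative is the nondecreasing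
   backward_map. Of the two integrals at most one is nonzero, since an integral over a reversed
   interval vanishes. *)
definition potential :: "real \<Rightarrow> real" where
  "potential y = integral {b (1/2)..y} backward_map - integral {y..b (1/2)} backward_map"

lemma quantile_in_support_interval: "0 < u \<Longrightarrow> u < 1 \<Longrightarrow> b u \<in> support_interval"
  unfolding support_interval_def using \<nu>.cdf_quantile by simp

lemma backward_map_quantile: "0 < u \<Longrightarrow> u < 1 \<Longrightarrow> backward_map (b u) = a u"
  unfolding backward_map_def using \<nu>.cdf_quantile by simp

lemma atLeastAtMost_subset_support_interval:
  "c \<in> support_interval \<Longrightarrow> d \<in> support_interval \<Longrightarrow> {c..d} \<subseteq> support_interval"
proof
  fix x assume "c \<in> support_interval" "d \<in> support_interval" "x \<in> {c..d}"
  then show "x \<in> support_interval"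
    unfolding support_interval_def
    using \<nu>.cdf_nondecreasing[of c x] \<nu>.cdf_nondecreasing[of x d] by auto
qed

lemma open_support_interval: "open support_interval"
proof -
  have "support_interval = F -` {0<..<1}"
    unfolding support_interval_def by auto
  then show ?thesis
    using continuous_open_vimage[of "{0<..<1}" F] \<nu>.isCont_cdf_atomless
    by (simp add: isCont_def continuous_at)
qed

lemma mono_on_backward_map: "mono_on support_interval backward_map"
  unfolding backward_map_def support_interval_def
  by (intro mono_onI mono_onD[OF \<mu>.mono_on_quantile]) (auto intro: \<nu>.cdf_nondecreasing)

lemma backward_map_integrable_on:
  "c \<in> support_interval \<Longrightarrow> d \<in> support_interval \<Longrightarrow> backward_map integrable_on {c..d}"
  using mono_on_subset[OF mono_on_backward_map atLeastAtMost_subset_support_interval]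
  by (rule integrable_on_mono_on)

lemma potential_diff:
  assumes y: "y \<in> support_interval" "y' \<in> support_interval" "y \<le> y'"
  shows "potential y' - potential y = integral {y..y'} backward_map"
proof -
  define y0 where "y0 = b (1/2)"
  have y0: "y0 \<in> support_interval"
    unfolding y0_def by (rule quantile_in_support_interval) auto
  have reversed: "c \<le> d \<Longrightarrow> integral {d..c} backward_map = 0" for c d
    by (cases "c < d") auto
  consider "y0 \<le> y" | "y \<le> y0" "y0 \<le> y'" | "y' \<le> y0"
    using y(3) by linarith
  then show ?thesis
  proof cases
    case 1
    then show ?thesis
      using Henstock_Kurzweil_Integration.integral_combine[OF 1 y(3) backward_map_integrable_on[OF y0 y(2)]] y(3)
      unfolding potential_def y0_def[symmetric] using reversed[OF 1] reversed[of y0 y'] by simp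
  next
    case 2
    then show ?thesis
      using Henstock_Kurzweil_Integration.integral_combine[OF 2 backward_map_integrable_on[OF y(1,2)]]
      unfolding potential_def y0_def[symmetric] using reversed[OF 2(1)] reversed[OF 2(2)] by simp
  next
    case 3
    then show ?thesis
      using Henstock_Kurzweil_Integration.integral_combine[OF y(3) 3 backward_map_integrable_on[OF y(1) y0]]
      unfolding potential_def y0_def[symmetric] using reversed[OF 3] reversed[of y y0] 3 y(3) by simp
  qed
qed

lemma potential_above_tangent:
  assumes u: "0 < u" "u < 1" and y: "y \<in> support_interval"
  shows "(y - b u) * a u \<le> potential y - potential (b u)"
proof (cases "b u \<le> y")
  case True
  have "(y - b u) * backward_map (b u) \<le> integral {b u..y} backward_map"
    using integral_mono_on_lower_bound[of "b u" y backward_map "b u"] True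
      mono_on_subset[OF mono_on_backward_map atLeastAtMost_subset_support_interval[OF quantile_in_support_interval[OF u] y]]
    by simp
  then show ?thesis
    using potential_diff[OF quantile_in_support_interval[OF u] y True] backward_map_quantile[OF u] by simp
next
  case False
  have "integral {y..b u} backward_map \<le> (b u - y) * backward_map (b u)"
    using integral_mono_on_upper_bound[of y "b u" backward_map "b u"] False
      mono_on_subset[OF mono_on_backward_map atLeastAtMost_subset_support_interval[OF y quantile_in_support_interval[OF u]]]
    by simp
  then show ?thesis
    using potential_diff[OF y quantile_in_support_interval[OF u]] False backward_map_quantile[OF u]
    by (simp add: algebra_simps)
qed

lemma quantile_less_backward_map:
  assumes u: "0 < u" "u < 1" and s: "s \<in> support_interval" "b u < s"
    and not_flat: "\<forall>s > b u. F s \<noteq> u"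
  shows "a u < backward_map s"
proof -
  have "u \<le> F s" "F s \<noteq> u"
    using \<nu>.quantile_le_iff[OF u, of s] s(2) not_flat by auto
  then show ?thesis
    using s(1) u strict_mono_onD[OF \<mu>.strict_mono_on_quantile, of u "F s"]
    unfolding backward_map_def support_interval_def by auto
qed

lemma backward_map_less_quantile:
  assumes u: "0 < u" "u < 1" and s: "s \<in> support_interval" "s < b u"
  shows "backward_map s < a u"
proof -
  have "F s < u"
    using \<nu>.quantile_le_iff[OF u, of s] s(2) by auto
  then show ?thesis
    using s(1) u strict_mono_onD[OF \<mu>.strict_mono_on_quantile, of "F s" u]
    unfolding backward_map_def support_interval_def by auto
qed

lemma potential_above_tangent_strict:
  assumes u: "0 < u" "u < 1" and y: "y \<in> support_interval" "y \<noteq> b u"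
    and not_flat: "\<forall>s > b u. F s \<noteq> u"
  shows "(y - b u) * a u < potential y - potential (b u)"
proof -
  define m where "m = (y + b u) / 2"
  have bu: "b u \<in> support_interval"
    using quantile_in_support_interval[OF u] .
  have "m \<in> {y..b u} \<union> {b u..y}"
    unfolding m_def by auto
  then have m: "m \<in> support_interval"
    using atLeastAtMost_subset_support_interval[OF y(1) bu]
      atLeastAtMost_subset_support_interval[OF bu y(1)] by blast
  show ?thesis
  proof (cases "b u < y")
    case True
    then have "(y - m) * a u < (y - m) * backward_map m"
      using quantile_less_backward_map[OF u m _ not_flat] unfolding m_def
      by (intro mult_strict_left_mono) auto
    moreover have "(m - b u) * a u + (y - m) * backward_map m \<le> integral {b u..y} backward_map"
      using integral_mono_on_lower_bound[of "b u" y backward_map m] True backward_map_quantile[OF u]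
        mono_on_subset[OF mono_on_backward_map atLeastAtMost_subset_support_interval[OF bu y(1)]]
      unfolding m_def by simp
    moreover have "(m - b u) * a u + (y - m) * a u = (y - b u) * a u"
      by (simp add: algebra_simps)
    ultimately show ?thesis
      using potential_diff[OF bu y(1)] True by simp
  next
    case False
    then have less: "y < b u"
      using y(2) by simp
    then have "(m - y) * backward_map m < (m - y) * a u"
      using backward_map_less_quantile[OF u m] unfolding m_def
      by (intro mult_strict_left_mono) auto
    moreover have "integral {y..b u} backward_map \<le> (m - y) * backward_map m + (b u - m) * a u"
      using integral_mono_on_upper_bound[of y "b u" backward_map m] less backward_map_quantile[OF u]
        mono_on_subset[OF mono_on_backward_map atLeastAtMost_subset_support_interval[OF y(1) bu]]
      unfolding m_def by simp
    moreover have "(m - y) * a u + (b u - m) * a u = (b u - y) * a u"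
      by (simp add: algebra_simps)
    ultimately show ?thesis
      using potential_diff[OF y(1) bu] less by (simp add: algebra_simps)
  qed
qed

lemma continuous_on_potential: "continuous_on support_interval potential"
proof (rule continuous_at_imp_continuous_on, intro ballI)
  fix y assume y: "y \<in> support_interval"
  obtain e where e: "e > 0" "ball y e \<subseteq> support_interval"
    using open_support_interval y open_contains_ball by blast
  define c d where "c = y - e/2" and "d = y + e/2"
  have cd: "c \<in> support_interval" "d \<in> support_interval"
    using e unfolding c_def d_def by (auto simp: subset_eq dist_real_def)
  have "continuous_on {c..d} (\<lambda>z. potential c + integral {c..z} backward_map)"
    by (intro continuous_intros indefinite_integral_continuous_1 backward_map_integrable_on cd)
  then have "continuous_on {c..d} potential"
  proof (rule continuous_on_cong[THEN iffD1, rotated -1])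
    fix z assume z: "z \<in> {c..d}"
    then have "z \<in> support_interval"
      using atLeastAtMost_subset_support_interval[OF cd] by blast
    then show "potential c + integral {c..z} backward_map = potential z"
      using potential_diff[OF cd(1), of z] z by simp
  qed simp
  moreover have "y \<in> interior {c..d}"
    using e unfolding c_def d_def by simp
  ultimately show "isCont potential y"
    using continuous_on_interior by blast
qed

(* With k = kantorovich_potential, (y - a u)^2 - (b u - a u)^2 - (k y - k (b u)) is twice the gap
   between the convex potential and its tangent at b u, hence nonnegative; and the integral of
   k o R over (0,1) is the same for every R with law nu. *)
definition kantorovich_potential :: "real \<Rightarrow> real" where
  "kantorovich_potential y = y\<^sup>2 - 2 * (if y \<in> support_interval then potential y else 0)"

lemma borel_measurable_potential_on_support [measurable]:
  "(\<lambda>y. if y \<in> support_interval then potential y else 0) \<in> borel_measurable borel"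
  using open_support_interval continuous_on_potential
  by (intro borel_measurable_continuous_on_if) auto

lemma borel_measurable_kantorovich_potential [measurable]:
  "kantorovich_potential \<in> borel_measurable borel"
  unfolding kantorovich_potential_def[abs_def] by measurable

lemma abs_potential_quantile_le:
  assumes u: "0 < u" "u < 1"
  shows "\<bar>potential (b u)\<bar> \<le> (b u - b (1/2))\<^sup>2 + (a (1/2))\<^sup>2 + (a u)\<^sup>2"
proof -
  define x where "x = b u - b (1/2)"
  have lower: "x * a (1/2) \<le> potential (b u)"
    using potential_above_tangent[of "1/2" "b u"] quantile_in_support_interval[OF u]
    unfolding x_def potential_def by simp
  have upper: "potential (b u) \<le> x * a u"
    using potential_above_tangent[OF u, of "b (1/2)"] quantile_in_support_interval[of "1/2"]
    unfolding x_def potential_def by (simp add: algebra_simps)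
  have "\<bar>x * a v\<bar> \<le> x\<^sup>2 + (a v)\<^sup>2" for v
  proof -
    have "2 * (\<bar>x\<bar> * \<bar>a v\<bar>) \<le> x\<^sup>2 + (a v)\<^sup>2"
      using sum_squares_bound[of "\<bar>x\<bar>" "\<bar>a v\<bar>"] by (simp add: mult.assoc)
    moreover have "0 \<le> \<bar>x\<bar> * \<bar>a v\<bar>"
      by simp
    ultimately show ?thesis
      unfolding abs_mult by linarith
  qed
  then have "x * a u \<le> x\<^sup>2 + (a u)\<^sup>2" "- (x * a (1/2)) \<le> x\<^sup>2 + (a (1/2))\<^sup>2"
    by (simp_all add: abs_le_iff)
  then show ?thesis
    using lower upper zero_le_power2[of "a u"] zero_le_power2[of "a (1/2)"]
    unfolding x_def[symmetric] abs_le_iff by linarith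
qed

lemma integrable_kantorovich_potential_quantile:
  "integrable lborel01 (\<lambda>u. kantorovich_potential (b u))"
proof -
  interpret lborel01: prob_space lborel01
    by (rule prob_space_lborel01)
  have "integrable lborel01 (\<lambda>u. (b u - b (1/2))\<^sup>2 + (a (1/2))\<^sup>2 + (a u)\<^sup>2)"
    using integrable_square_diff[of b lborel01 "\<lambda>_. b (1/2)"]
      \<nu>.square_integrable_quantile[OF square_integrable_\<nu>]
      \<mu>.square_integrable_quantile[OF square_integrable_\<mu>]
    by simp
  then have "integrable lborel01 (\<lambda>u. if b u \<in> support_interval then potential (b u) else 0)"
    by (rule Bochner_Integration.integrable_bound)
      (auto simp: quantile_in_support_interval abs_potential_quantile_le)
  then show ?thesis
    using \<nu>.square_integrable_quantile[OF square_integrable_\<nu>]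
    unfolding kantorovich_potential_def by simp
qed

lemma integrable_kantorovich_potential: "integrable \<nu> kantorovich_potential"
  using \<nu>.integrable_quantile_iff integrable_kantorovich_potential_quantile by simp

lemma AE_quantile_coupling_in_support_interval:
  assumes R: "R \<in> borel_measurable lborel01" and distr_R: "distr lborel01 borel R = \<nu>"
  shows "AE u in lborel01. R u \<in> support_interval"
proof -
  have "AE y in \<nu>. y \<in> support_interval"
    using open_support_interval quantile_in_support_interval
    by (subst \<nu>.AE_quantile_iff) auto
  then show ?thesis
    using R open_support_interval unfolding distr_R[symmetric] by (simp add: AE_distr_iff)
qed

definition coupling_gap :: "(real \<Rightarrow> real) \<Rightarrow> real \<Rightarrow> real" where
  "coupling_gap R u =
     (R u - a u)\<^sup>2 - (b u - a u)\<^sup>2 - (kantorovich_potential (R u) - kantorovich_potential (b u))"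

lemma coupling_gap_eq_tangent_gap:
  assumes "0 < u" "u < 1" "R u \<in> support_interval"
  shows "coupling_gap R u = 2 * (potential (R u) - potential (b u) - (R u - b u) * a u)"
  using assms quantile_in_support_interval
  unfolding coupling_gap_def kantorovich_potential_def by (simp add: power2_eq_square algebra_simps)

lemma AE_coupling_gap_pos:
  assumes R: "R \<in> borel_measurable lborel01" and distr_R: "distr lborel01 borel R = \<nu>"
  shows "AE u in lborel01. R u \<noteq> b u \<longrightarrow> 0 < coupling_gap R u"
  using AE_quantile_coupling_in_support_interval[OF assms] \<nu>.AE_cdf_neq_right_of_quantile AE_space
proof eventually_elim
  case (elim u)
  then show ?case
    using coupling_gap_eq_tangent_gap potential_above_tangent_strict by force
qed

lemma AE_coupling_gap_nonneg:
  assumes R: "R \<in> borel_measurable lborel01" and distr_R: "distr lborel01 borel R = \<nu>"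
  shows "AE u in lborel01. 0 \<le> coupling_gap R u"
  using AE_coupling_gap_pos[OF assms]
  by eventually_elim (force simp: coupling_gap_def)

lemma square_integrable_quantile_diff: "integrable lborel01 (\<lambda>u. (b u - a u)\<^sup>2)"
  using \<nu>.square_integrable_quantile[OF square_integrable_\<nu>]
    \<mu>.square_integrable_quantile[OF square_integrable_\<mu>]
  by (intro integrable_square_diff) auto

lemma coupling_cost_eq:
  assumes R: "R \<in> borel_measurable lborel01" and distr_R: "distr lborel01 borel R = \<nu>"
    and R_L2: "integrable lborel01 (\<lambda>u. (R u - a u)\<^sup>2)"
  shows "integrable lborel01 (coupling_gap R)"
    and "(\<integral>u. (R u - a u)\<^sup>2 \<partial>lborel01) =
           (\<integral>u. (b u - a u)\<^sup>2 \<partial>lborel01) + (\<integral>u. coupling_gap R u \<partial>lborel01)"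
proof -
  have "integrable lborel01 (\<lambda>u. kantorovich_potential (R u))"
    using integrable_kantorovich_potential integrable_distr_eq[OF R, of kantorovich_potential] distr_R
    by simp
  moreover have "(\<integral>u. kantorovich_potential (R u) \<partial>lborel01) = (\<integral>u. kantorovich_potential (b u) \<partial>lborel01)"
    using integral_distr[OF R, of kantorovich_potential] \<nu>.integral_quantile[of kantorovich_potential] distr_R
    by simp
  ultimately show "integrable lborel01 (coupling_gap R)"
    and "(\<integral>u. (R u - a u)\<^sup>2 \<partial>lborel01) =
           (\<integral>u. (b u - a u)\<^sup>2 \<partial>lborel01) + (\<integral>u. coupling_gap R u \<partial>lborel01)"
    using R_L2 square_integrable_quantile_diff integrable_kantorovich_potential_quantile
    unfolding coupling_gap_def[abs_def] by simp_all
qed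

theorem quantile_coupling_optimal:
  assumes R: "R \<in> borel_measurable lborel01" and distr_R: "distr lborel01 borel R = \<nu>"
  shows "(\<integral>\<^sup>+u. ennreal ((b u - a u)\<^sup>2) \<partial>lborel01) \<le> (\<integral>\<^sup>+u. ennreal ((R u - a u)\<^sup>2) \<partial>lborel01)"
    and "(\<integral>\<^sup>+u. ennreal ((b u - a u)\<^sup>2) \<partial>lborel01) = (\<integral>\<^sup>+u. ennreal ((R u - a u)\<^sup>2) \<partial>lborel01)
           \<Longrightarrow> AE u in lborel01. R u = b u"
proof -
  have nn_integral_eq: "(\<integral>\<^sup>+u. ennreal ((f u)\<^sup>2) \<partial>lborel01) = ennreal (\<integral>u. (f u)\<^sup>2 \<partial>lborel01)"
    if "integrable lborel01 (\<lambda>u. (f u)\<^sup>2)" for f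
    using that by (simp add: nn_integral_eq_integral)
  have R_L2_iff: "integrable lborel01 (\<lambda>u. (R u - a u)\<^sup>2) \<longleftrightarrow>
      (\<integral>\<^sup>+u. ennreal ((R u - a u)\<^sup>2) \<partial>lborel01) < \<infinity>"
    using R by (simp add: integrable_iff_bounded)
  have gap_integral_nonneg: "0 \<le> (\<integral>u. coupling_gap R u \<partial>lborel01)"
    by (rule integral_nonneg_AE[OF AE_coupling_gap_nonneg[OF R distr_R]])
  show "(\<integral>\<^sup>+u. ennreal ((b u - a u)\<^sup>2) \<partial>lborel01) \<le> (\<integral>\<^sup>+u. ennreal ((R u - a u)\<^sup>2) \<partial>lborel01)"
  proof (cases "integrable lborel01 (\<lambda>u. (R u - a u)\<^sup>2)")
    case True
    then show ?thesis
      using coupling_cost_eq[OF R distr_R True] gap_integral_nonneg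
      by (simp add: nn_integral_eq square_integrable_quantile_diff)
  next
    case False
    then show ?thesis
      using R_L2_iff by (simp add: less_top[symmetric])
  qed
  assume eq: "(\<integral>\<^sup>+u. ennreal ((b u - a u)\<^sup>2) \<partial>lborel01) = (\<integral>\<^sup>+u. ennreal ((R u - a u)\<^sup>2) \<partial>lborel01)"
  then have "(\<integral>\<^sup>+u. ennreal ((R u - a u)\<^sup>2) \<partial>lborel01) = ennreal (\<integral>u. (b u - a u)\<^sup>2 \<partial>lborel01)"
    using nn_integral_eq[OF square_integrable_quantile_diff] by simp
  then have R_L2: "integrable lborel01 (\<lambda>u. (R u - a u)\<^sup>2)"
    using R_L2_iff by simp
  have "ennreal (\<integral>u. (b u - a u)\<^sup>2 \<partial>lborel01) = ennreal (\<integral>u. (R u - a u)\<^sup>2 \<partial>lborel01)"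
    using eq by (simp add: nn_integral_eq square_integrable_quantile_diff R_L2)
  then have "(\<integral>u. (b u - a u)\<^sup>2 \<partial>lborel01) = (\<integral>u. (R u - a u)\<^sup>2 \<partial>lborel01)"
    by (simp add: ennreal_inj integral_nonneg_AE)
  then have "(\<integral>u. coupling_gap R u \<partial>lborel01) = 0"
    using coupling_cost_eq(2)[OF R distr_R R_L2] by simp
  then have "AE u in lborel01. coupling_gap R u = 0"
    using integral_nonneg_eq_0_iff_AE[OF coupling_cost_eq(1)[OF R distr_R R_L2] AE_coupling_gap_nonneg[OF R distr_R]]
    by simp
  then show "AE u in lborel01. R u = b u"
    using AE_coupling_gap_pos[OF R distr_R] by eventually_elim auto
qed

end

lemma monotone_transportI: "P2ac \<mu> \<Longrightarrow> P2ac \<nu> \<Longrightarrow> monotone_transport \<mu> \<nu>"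
  by (simp add: monotone_transport_def monotone_transport_axioms_def P2ac_atomless_distribution)
    (simp add: P2ac_def)

definition monotone_rearrangement :: "real measure \<Rightarrow> real measure \<Rightarrow> real \<Rightarrow> real" where
  "monotone_rearrangement \<mu> \<nu> x = quantile0 \<nu> (cdf \<mu> x)"

context monotone_transport
begin

lemma borel_measurable_monotone_rearrangement [measurable]:
  "monotone_rearrangement \<mu> \<nu> \<in> borel_measurable borel"
  unfolding monotone_rearrangement_def[abs_def] by measurable

lemma monotone_rearrangement_quantile:
  "0 < u \<Longrightarrow> u < 1 \<Longrightarrow> monotone_rearrangement \<mu> \<nu> (a u) = b u"
  by (simp add: monotone_rearrangement_def quantile0_def \<mu>.cdf_quantile)

lemma transport_cost_quantile:
  assumes [measurable]: "S \<in> borel_measurable borel"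
  shows "(\<integral>\<^sup>+x. ennreal ((S x - x)\<^sup>2) \<partial>\<mu>) = (\<integral>\<^sup>+u. ennreal ((S (a u) - a u)\<^sup>2) \<partial>lborel01)"
  by (intro \<mu>.nn_integral_quantile) measurable

lemma transport_cost_monotone_rearrangement:
  "(\<integral>\<^sup>+x. ennreal ((monotone_rearrangement \<mu> \<nu> x - x)\<^sup>2) \<partial>\<mu>) =
     (\<integral>\<^sup>+u. ennreal ((b u - a u)\<^sup>2) \<partial>lborel01)"
  unfolding transport_cost_quantile[OF borel_measurable_monotone_rearrangement]
  by (intro nn_integral_cong) (simp add: monotone_rearrangement_quantile)

lemma distr_quantile_comp:
  assumes "S \<in> borel_measurable borel" "distr \<mu> borel S = \<nu>"
  shows "distr lborel01 borel (\<lambda>u. S (a u)) = \<nu>"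
  using \<mu>.distr_comp_quantile[OF assms(1)] assms(2) by simp

lemma distr_monotone_rearrangement: "distr \<mu> borel (monotone_rearrangement \<mu> \<nu>) = \<nu>"
proof -
  have "distr \<mu> borel (monotone_rearrangement \<mu> \<nu>) = distr lborel01 borel b"
    unfolding \<mu>.distr_comp_quantile[OF borel_measurable_monotone_rearrangement, symmetric]
    by (rule distr_cong) (simp_all add: monotone_rearrangement_quantile)
  then show ?thesis
    by (simp add: \<nu>.distr_quantile)
qed

lemma transport_cost_monotone_rearrangement_le:
  assumes [measurable]: "S \<in> borel_measurable borel" and "distr \<mu> borel S = \<nu>"
  shows "(\<integral>\<^sup>+x. ennreal ((monotone_rearrangement \<mu> \<nu> x - x)\<^sup>2) \<partial>\<mu>) \<le> (\<integral>\<^sup>+x. ennreal ((S x - x)\<^sup>2) \<partial>\<mu>)"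
  unfolding transport_cost_monotone_rearrangement transport_cost_quantile[OF assms(1)]
  using assms by (intro quantile_coupling_optimal(1) distr_quantile_comp) measurable

theorem is_ot_map_monotone_rearrangement: "is_ot_map \<mu> \<nu> (monotone_rearrangement \<mu> \<nu>)"
  unfolding is_ot_map_def \<mu>.borel_measurable_iff_borel
  using distr_monotone_rearrangement transport_cost_monotone_rearrangement_le by simp

theorem ot_map_AE_eq_monotone_rearrangement:
  assumes T: "is_ot_map \<mu> \<nu> T"
  shows "AE x in \<mu>. T x = monotone_rearrangement \<mu> \<nu> x"
proof -
  have T_meas [measurable]: "T \<in> borel_measurable borel" and distr_T: "distr \<mu> borel T = \<nu>"
    using T by (simp_all add: is_ot_map_def \<mu>.borel_measurable_iff_borel)
  have "(\<integral>\<^sup>+x. ennreal ((T x - x)\<^sup>2) \<partial>\<mu>) \<le> (\<integral>\<^sup>+x. ennreal ((monotone_rearrangement \<mu> \<nu> x - x)\<^sup>2) \<partial>\<mu>)"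
    using T distr_monotone_rearrangement
    by (simp add: is_ot_map_def \<mu>.borel_measurable_iff_borel)
  then have "(\<integral>\<^sup>+u. ennreal ((b u - a u)\<^sup>2) \<partial>lborel01) = (\<integral>\<^sup>+u. ennreal ((T (a u) - a u)\<^sup>2) \<partial>lborel01)"
    using transport_cost_monotone_rearrangement_le[OF T_meas distr_T]
    unfolding transport_cost_monotone_rearrangement transport_cost_quantile[OF T_meas]
    by (rule antisym[rotated])
  then have "AE u in lborel01. T (a u) = b u"
    by (intro quantile_coupling_optimal(2) distr_quantile_comp distr_T) measurable
  then have "AE u in lborel01. T (a u) = monotone_rearrangement \<mu> \<nu> (a u)"
    by (rule AE_mp) (auto simp: monotone_rearrangement_quantile)
  then show ?thesis
    by (subst \<mu>.AE_quantile_iff) measurable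
qed

lemma nn_integral_ot_map_residual:
  assumes T: "is_ot_map \<mu> \<nu> T" and c [measurable]: "c \<in> borel_measurable borel"
  shows "(\<integral>\<^sup>+x. ennreal ((T x - x - c x)\<^sup>2) \<partial>\<mu>) =
    (\<integral>\<^sup>+u. ennreal ((b u - a u - c (a u))\<^sup>2) \<partial>lborel01)"
proof -
  have "(\<integral>\<^sup>+x. ennreal ((T x - x - c x)\<^sup>2) \<partial>\<mu>) =
      (\<integral>\<^sup>+x. ennreal ((monotone_rearrangement \<mu> \<nu> x - x - c x)\<^sup>2) \<partial>\<mu>)"
    using ot_map_AE_eq_monotone_rearrangement[OF T] by (intro nn_integral_cong_AE) auto
  also have "\<dots> = (\<integral>\<^sup>+u. ennreal ((monotone_rearrangement \<mu> \<nu> (a u) - a u - c (a u))\<^sup>2) \<partial>lborel01)"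
    by (intro \<mu>.nn_integral_quantile) measurable
  also have "\<dots> = (\<integral>\<^sup>+u. ennreal ((b u - a u - c (a u))\<^sup>2) \<partial>lborel01)"
    by (intro nn_integral_cong) (simp add: monotone_rearrangement_quantile)
  finally show ?thesis .
qed

lemma nn_integral_quantile_diff_finite:
  "(\<integral>\<^sup>+u. ennreal ((b u - a u)\<^sup>2) \<partial>lborel01) < \<infinity>"
  using square_integrable_quantile_diff by (simp add: nn_integral_eq_integral)

end

section \<open>Derivatives in quadratic mean\<close>

definition has_L2_derivative :: "'a measure \<Rightarrow> (real \<Rightarrow> 'a \<Rightarrow> real) \<Rightarrow> ('a \<Rightarrow> real) \<Rightarrow> bool" where
  "has_L2_derivative M F g \<longleftrightarrow>
     (\<forall>\<epsilon>>0. \<forall>\<^sub>F t in at 0. (\<integral>\<^sup>+x. ennreal ((F t x - t * g x)\<^sup>2) \<partial>M) \<le> ennreal (\<epsilon> * t\<^sup>2))"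

lemma has_L2_derivative_cong:
  "(\<And>x. x \<in> space M \<Longrightarrow> g x = g' x) \<Longrightarrow> has_L2_derivative M F g \<longleftrightarrow> has_L2_derivative M F g'"
  unfolding has_L2_derivative_def by (simp cong: nn_integral_cong)

lemma nn_integral_square_diff_le:
  fixes f g :: "'a \<Rightarrow> real"
  assumes [measurable]: "f \<in> borel_measurable M" "g \<in> borel_measurable M"
  shows "(\<integral>\<^sup>+x. ennreal ((f x - g x)\<^sup>2) \<partial>M) \<le>
    2 * (\<integral>\<^sup>+x. ennreal ((f x)\<^sup>2) \<partial>M) + 2 * (\<integral>\<^sup>+x. ennreal ((g x)\<^sup>2) \<partial>M)"
proof -
  have "(\<integral>\<^sup>+x. ennreal ((f x - g x)\<^sup>2) \<partial>M) \<le> (\<integral>\<^sup>+x. 2 * ennreal ((f x)\<^sup>2) + 2 * ennreal ((g x)\<^sup>2) \<partial>M)"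
  proof (rule nn_integral_mono)
    fix x
    have "ennreal ((f x - g x)\<^sup>2) \<le> ennreal (2 * (f x)\<^sup>2 + 2 * (g x)\<^sup>2)"
      by (rule ennreal_leI) (rule square_diff_le)
    then show "ennreal ((f x - g x)\<^sup>2) \<le> 2 * ennreal ((f x)\<^sup>2) + 2 * ennreal ((g x)\<^sup>2)"
      by (simp add: ennreal_plus ennreal_mult)
  qed
  also have "\<dots> = 2 * (\<integral>\<^sup>+x. ennreal ((f x)\<^sup>2) \<partial>M) + 2 * (\<integral>\<^sup>+x. ennreal ((g x)\<^sup>2) \<partial>M)"
    by (simp add: nn_integral_add nn_integral_cmult)
  finally show ?thesis .
qed

lemma nn_integral_square_scale:
  fixes g :: "'a \<Rightarrow> real"
  assumes "g \<in> borel_measurable M"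
  shows "(\<integral>\<^sup>+x. ennreal ((t * g x)\<^sup>2) \<partial>M) = ennreal (t\<^sup>2) * (\<integral>\<^sup>+x. ennreal ((g x)\<^sup>2) \<partial>M)"
  using assms by (simp add: power_mult_distrib ennreal_mult nn_integral_cmult)

lemma has_L2_derivative_AE_unique:
  fixes g h :: "'a \<Rightarrow> real"
  assumes F_meas: "\<forall>\<^sub>F t in at 0. F t \<in> borel_measurable M"
    and [measurable]: "g \<in> borel_measurable M" "h \<in> borel_measurable M"
    and g: "has_L2_derivative M F g" and h: "has_L2_derivative M F h"
  shows "AE x in M. g x = h x"
proof -
  have bound: "(\<integral>\<^sup>+x. ennreal ((g x - h x)\<^sup>2) \<partial>M) \<le> ennreal (4 * \<epsilon>)" if "\<epsilon> > 0" for \<epsilon>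
  proof -
    have "\<forall>\<^sub>F t in at 0. F t \<in> borel_measurable M \<and>
        (\<integral>\<^sup>+x. ennreal ((F t x - t * g x)\<^sup>2) \<partial>M) \<le> ennreal (\<epsilon> * t\<^sup>2) \<and>
        (\<integral>\<^sup>+x. ennreal ((F t x - t * h x)\<^sup>2) \<partial>M) \<le> ennreal (\<epsilon> * t\<^sup>2)"
      using g h \<open>\<epsilon> > 0\<close> unfolding has_L2_derivative_def by (intro eventually_conj F_meas) auto
    then obtain t where t: "t \<noteq> 0" and [measurable]: "F t \<in> borel_measurable M"
      and Fg: "(\<integral>\<^sup>+x. ennreal ((F t x - t * g x)\<^sup>2) \<partial>M) \<le> ennreal (\<epsilon> * t\<^sup>2)"
      and Fh: "(\<integral>\<^sup>+x. ennreal ((F t x - t * h x)\<^sup>2) \<partial>M) \<le> ennreal (\<epsilon> * t\<^sup>2)"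
      by (elim eventually_at_0_obtain_nonzero) blast
    have "ennreal (t\<^sup>2) * (\<integral>\<^sup>+x. ennreal ((g x - h x)\<^sup>2) \<partial>M) = (\<integral>\<^sup>+x. ennreal ((t * (g x - h x))\<^sup>2) \<partial>M)"
      by (rule nn_integral_square_scale[symmetric]) measurable
    also have "\<dots> = (\<integral>\<^sup>+x. ennreal (((F t x - t * h x) - (F t x - t * g x))\<^sup>2) \<partial>M)"
      by (simp add: right_diff_distrib)
    also have "\<dots> \<le> 2 * (\<integral>\<^sup>+x. ennreal ((F t x - t * h x)\<^sup>2) \<partial>M) + 2 * (\<integral>\<^sup>+x. ennreal ((F t x - t * g x)\<^sup>2) \<partial>M)"
      by (rule nn_integral_square_diff_le) measurable
    also have "\<dots> \<le> 2 * ennreal (\<epsilon> * t\<^sup>2) + 2 * ennreal (\<epsilon> * t\<^sup>2)"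
      using Fg Fh by (intro add_mono mult_left_mono) auto
    also have "\<dots> = ennreal (t\<^sup>2) * ennreal (4 * \<epsilon>)"
      using \<open>\<epsilon> > 0\<close> by (simp flip: ennreal_mult ennreal_plus ennreal_numeral)
    finally show ?thesis
      using t by (simp add: ennreal_mult_le_mult_iff)
  qed
  have "(\<integral>\<^sup>+x. ennreal ((g x - h x)\<^sup>2) \<partial>M) \<le> 0"
  proof (rule ennreal_le_epsilon)
    fix e :: real assume "0 < e"
    then show "(\<integral>\<^sup>+x. ennreal ((g x - h x)\<^sup>2) \<partial>M) \<le> 0 + ennreal e"
      using bound[of "e / 4"] by simp
  qed
  then have "(\<integral>\<^sup>+x. ennreal ((g x - h x)\<^sup>2) \<partial>M) = 0"
    by simp
  then have "AE x in M. ennreal ((g x - h x)\<^sup>2) = 0"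
    by (subst (asm) nn_integral_0_iff_AE) measurable
  then show ?thesis
    by eventually_elim simp
qed

lemma has_L2_derivative_square_integrable:
  fixes g :: "'a \<Rightarrow> real"
  assumes F: "\<forall>\<^sub>F t in at 0. F t \<in> borel_measurable M \<and> (\<integral>\<^sup>+x. ennreal ((F t x)\<^sup>2) \<partial>M) < \<infinity>"
    and [measurable]: "g \<in> borel_measurable M" and g: "has_L2_derivative M F g"
  shows "(\<integral>\<^sup>+x. ennreal ((g x)\<^sup>2) \<partial>M) < \<infinity>"
proof -
  have "\<forall>\<^sub>F t in at 0. (F t \<in> borel_measurable M \<and> (\<integral>\<^sup>+x. ennreal ((F t x)\<^sup>2) \<partial>M) < \<infinity>) \<and>
      (\<integral>\<^sup>+x. ennreal ((F t x - t * g x)\<^sup>2) \<partial>M) \<le> ennreal (1 * t\<^sup>2)"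
    using eventually_conj[OF F g[unfolded has_L2_derivative_def, rule_format, OF zero_less_one]] .
  then obtain t where t: "t \<noteq> 0" and [measurable]: "F t \<in> borel_measurable M"
    and F_fin: "(\<integral>\<^sup>+x. ennreal ((F t x)\<^sup>2) \<partial>M) < \<infinity>"
    and Fg: "(\<integral>\<^sup>+x. ennreal ((F t x - t * g x)\<^sup>2) \<partial>M) \<le> ennreal (1 * t\<^sup>2)"
    by (elim eventually_at_0_obtain_nonzero) blast
  have "ennreal (t\<^sup>2) * (\<integral>\<^sup>+x. ennreal ((g x)\<^sup>2) \<partial>M) = (\<integral>\<^sup>+x. ennreal ((F t x - (F t x - t * g x))\<^sup>2) \<partial>M)"
    by (simp add: nn_integral_square_scale[symmetric])
  also have "\<dots> \<le> 2 * (\<integral>\<^sup>+x. ennreal ((F t x)\<^sup>2) \<partial>M) + 2 * (\<integral>\<^sup>+x. ennreal ((F t x - t * g x)\<^sup>2) \<partial>M)"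
    by (rule nn_integral_square_diff_le) measurable
  also have "\<dots> < \<infinity>"
    using F_fin Fg by (simp add: ennreal_mult_less_top order.strict_trans1)
  finally show ?thesis
    using t by (auto simp: ennreal_mult_less_top)
qed

section \<open>Quantile gradients and transport linearizations\<close>

definition quantile_increment :: "('a::real_vector \<Rightarrow> real measure) \<Rightarrow> 'a \<Rightarrow> 'a \<Rightarrow> real \<Rightarrow> real \<Rightarrow> real" where
  "quantile_increment P \<theta> h t u = quantile (P (\<theta> + t *\<^sub>R h)) u - quantile (P \<theta>) u"

lemma quantile_gradient_iff:
  "quantile_gradient P \<theta> G \<longleftrightarrow> G \<in> borel_measurable borel \<and>
     (\<integral>\<^sup>+u. ennreal ((norm (G u))\<^sup>2) \<partial>lborel01) < \<infinity> \<and>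
     (\<forall>h. has_L2_derivative lborel01 (quantile_increment P \<theta> h) (\<lambda>u. G u \<bullet> h))"
  unfolding quantile_gradient_def has_L2_derivative_def quantile_increment_def
    nn_integral_lborel01 nn_integral_Icc01_eq_Ioo01 ..

locale P2ac_model =
  fixes \<Theta> :: "(real^'p::finite) set" and P :: "real^'p \<Rightarrow> real measure" and \<theta> :: "real^'p"
  assumes open_\<Theta>: "open \<Theta>" and P2ac_P: "\<And>\<eta>. \<eta> \<in> \<Theta> \<Longrightarrow> P2ac (P \<eta>)" and \<theta>_in_\<Theta>: "\<theta> \<in> \<Theta>"
begin

lemma monotone_transport_from_\<theta>: "\<eta> \<in> \<Theta> \<Longrightarrow> monotone_transport (P \<theta>) (P \<eta>)"
  by (intro monotone_transportI P2ac_P \<theta>_in_\<Theta>)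

sublocale \<theta>: atomless_distribution "P \<theta>"
  by (intro P2ac_atomless_distribution P2ac_P \<theta>_in_\<Theta>)

lemma eventually_in_\<Theta>: "\<forall>\<^sub>F t in at 0. \<theta> + t *\<^sub>R h \<in> \<Theta>"
proof -
  have "((\<lambda>t. \<theta> + t *\<^sub>R h) \<longlongrightarrow> \<theta>) (at (0::real))"
    by (auto intro!: tendsto_eq_intros)
  then show ?thesis
    using open_\<Theta> \<theta>_in_\<Theta> by (rule topological_tendstoD)
qed

lemma ot_residual_eq_quantile_residual:
  assumes "\<theta> + t *\<^sub>R h \<in> \<Theta>" and "is_ot_map (P \<theta>) (P (\<theta> + t *\<^sub>R h)) T"
    and [measurable]: "\<Phi> \<in> borel_measurable borel"
  shows "(\<integral>\<^sup>+x. ennreal ((T x - x - t * (\<Phi> x \<bullet> h))\<^sup>2) \<partial>P \<theta>) =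
    (\<integral>\<^sup>+u. ennreal ((quantile_increment P \<theta> h t u - t * (\<Phi> (quantile (P \<theta>) u) \<bullet> h))\<^sup>2) \<partial>lborel01)"
  unfolding quantile_increment_def
  by (rule monotone_transport.nn_integral_ot_map_residual[OF monotone_transport_from_\<theta>]) (use assms in auto)

lemma ot_residual_little_o_iff_has_L2_derivative:
  assumes T: "\<forall>t. \<theta> + t *\<^sub>R h \<in> \<Theta> \<longrightarrow> is_ot_map (P \<theta>) (P (\<theta> + t *\<^sub>R h)) (T t)"
    and \<Phi>: "\<Phi> \<in> borel_measurable borel"
  shows "(\<forall>\<epsilon>>0. \<forall>\<^sub>F t in at 0. (\<integral>\<^sup>+x. ennreal ((T t x - x - t * (\<Phi> x \<bullet> h))\<^sup>2) \<partial>P \<theta>) \<le> ennreal (\<epsilon> * t\<^sup>2))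
    \<longleftrightarrow> has_L2_derivative lborel01 (quantile_increment P \<theta> h) (\<lambda>u. \<Phi> (quantile (P \<theta>) u) \<bullet> h)"
proof -
  have "\<forall>\<^sub>F t in at 0. (\<integral>\<^sup>+x. ennreal ((T t x - x - t * (\<Phi> x \<bullet> h))\<^sup>2) \<partial>P \<theta>) =
      (\<integral>\<^sup>+u. ennreal ((quantile_increment P \<theta> h t u - t * (\<Phi> (quantile (P \<theta>) u) \<bullet> h))\<^sup>2) \<partial>lborel01)"
    using eventually_in_\<Theta> by eventually_elim (use T \<Phi> ot_residual_eq_quantile_residual in blast)
  then have "(\<forall>\<^sub>F t in at 0. (\<integral>\<^sup>+x. ennreal ((T t x - x - t * (\<Phi> x \<bullet> h))\<^sup>2) \<partial>P \<theta>) \<le> ennreal (\<epsilon> * t\<^sup>2)) \<longleftrightarrow>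
      (\<forall>\<^sub>F t in at 0. (\<integral>\<^sup>+u. ennreal ((quantile_increment P \<theta> h t u - t * (\<Phi> (quantile (P \<theta>) u) \<bullet> h))\<^sup>2) \<partial>lborel01)
         \<le> ennreal (\<epsilon> * t\<^sup>2))" for \<epsilon>
    by (intro eventually_subst) (auto elim: eventually_mono)
  then show ?thesis
    unfolding has_L2_derivative_def by simp
qed

lemma is_ot_map_monotone_rearrangement_along:
  "\<forall>t. \<theta> + t *\<^sub>R h \<in> \<Theta> \<longrightarrow>
     is_ot_map (P \<theta>) (P (\<theta> + t *\<^sub>R h)) (monotone_rearrangement (P \<theta>) (P (\<theta> + t *\<^sub>R h)))"
  using monotone_transport.is_ot_map_monotone_rearrangement[OF monotone_transport_from_\<theta>] by blast

lemma transport_linearization_iff: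
  "transport_linearization TYPE('p) \<Theta> P \<theta> \<Phi> \<longleftrightarrow> \<Phi> \<in> borel_measurable borel \<and>
     (\<forall>h. has_L2_derivative lborel01 (quantile_increment P \<theta> h) (\<lambda>u. \<Phi> (quantile (P \<theta>) u) \<bullet> h))"
proof (cases "\<Phi> \<in> borel_measurable borel")
  case True
  note ot = is_ot_map_monotone_rearrangement_along
  note residual_iff = ot_residual_little_o_iff_has_L2_derivative[OF _ True]
  show ?thesis
  proof
    assume TL: "transport_linearization TYPE('p) \<Theta> P \<theta> \<Phi>"
    have "has_L2_derivative lborel01 (quantile_increment P \<theta> h) (\<lambda>u. \<Phi> (quantile (P \<theta>) u) \<bullet> h)" for h
      using TL[unfolded transport_linearization_def, THEN conjunct2, rule_format, OF ot[of h, rule_format]]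
      unfolding residual_iff[OF ot[of h], symmetric] by blast
    with True show "\<Phi> \<in> borel_measurable borel \<and>
        (\<forall>h. has_L2_derivative lborel01 (quantile_increment P \<theta> h) (\<lambda>u. \<Phi> (quantile (P \<theta>) u) \<bullet> h))"
      by blast
  next
    assume "\<Phi> \<in> borel_measurable borel \<and>
        (\<forall>h. has_L2_derivative lborel01 (quantile_increment P \<theta> h) (\<lambda>u. \<Phi> (quantile (P \<theta>) u) \<bullet> h))"
    with residual_iff True show "transport_linearization TYPE('p) \<Theta> P \<theta> \<Phi>"
      unfolding transport_linearization_def by blast
  qed
qed (simp add: transport_linearization_def)

lemma eventually_quantile_increment_square_integrable:
  "\<forall>\<^sub>F t in at 0. quantile_increment P \<theta> h t \<in> borel_measurable lborel01 \<and>
     (\<integral>\<^sup>+u. ennreal ((quantile_increment P \<theta> h t u)\<^sup>2) \<partial>lborel01) < \<infinity>"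
  using eventually_in_\<Theta>[of h]
proof eventually_elim
  case (elim t)
  interpret monotone_transport "P \<theta>" "P (\<theta> + t *\<^sub>R h)"
    using elim by (rule monotone_transport_from_\<theta>)
  show ?case
    unfolding quantile_increment_def[abs_def]
    using nn_integral_quantile_diff_finite by simp
qed

lemma quantile_gradient_of_transport_linearization:
  assumes TL: "transport_linearization TYPE('p) \<Theta> P \<theta> \<Phi>"
  shows "quantile_gradient P \<theta> (\<lambda>u. \<Phi> (quantile0 (P \<theta>) u))"
proof -
  have [measurable]: "\<Phi> \<in> borel_measurable borel"
    and derivative: "has_L2_derivative lborel01 (quantile_increment P \<theta> h) (\<lambda>u. \<Phi> (quantile (P \<theta>) u) \<bullet> h)" for h
    using TL unfolding transport_linearization_iff by auto
  have "(\<integral>\<^sup>+u. ennreal ((\<Phi> (quantile (P \<theta>) u) \<bullet> axis i 1)\<^sup>2) \<partial>lborel01) < \<infinity>" for i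
    by (rule has_L2_derivative_square_integrable[OF
          eventually_quantile_increment_square_integrable _ derivative]) measurable
  then have "(\<Sum>i\<in>UNIV. \<integral>\<^sup>+u. ennreal ((\<Phi> (quantile (P \<theta>) u) $ i)\<^sup>2) \<partial>lborel01) < \<infinity>"
    by (simp add: inner_axis ennreal_sum_less_top)
  moreover have "(\<integral>\<^sup>+u. ennreal ((norm (\<Phi> (quantile0 (P \<theta>) u)))\<^sup>2) \<partial>lborel01) =
      (\<integral>\<^sup>+u. (\<Sum>i\<in>UNIV. ennreal ((\<Phi> (quantile (P \<theta>) u) $ i)\<^sup>2)) \<partial>lborel01)"
    by (intro nn_integral_cong)
      (simp add: quantile0_def power2_norm_vec sum_ennreal)
  moreover have "(\<integral>\<^sup>+u. (\<Sum>i\<in>UNIV. ennreal ((\<Phi> (quantile (P \<theta>) u) $ i)\<^sup>2)) \<partial>lborel01) =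
      (\<Sum>i\<in>UNIV. \<integral>\<^sup>+u. ennreal ((\<Phi> (quantile (P \<theta>) u) $ i)\<^sup>2) \<partial>lborel01)"
    by (rule nn_integral_sum) measurable
  moreover have "has_L2_derivative lborel01 (quantile_increment P \<theta> h) (\<lambda>u. \<Phi> (quantile0 (P \<theta>) u) \<bullet> h)" for h
    using derivative[of h] by (subst has_L2_derivative_cong[where g'="\<lambda>u. \<Phi> (quantile (P \<theta>) u) \<bullet> h"])
      (simp_all add: quantile0_def)
  ultimately show ?thesis
    unfolding quantile_gradient_iff by simp
qed

lemma transport_linearization_of_quantile_gradient:
  assumes QG: "quantile_gradient P \<theta> G"
  shows "transport_linearization TYPE('p) \<Theta> P \<theta> (\<lambda>x. G (cdf (P \<theta>) x))"
proof -
  have [measurable]: "G \<in> borel_measurable borel"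
    and "has_L2_derivative lborel01 (quantile_increment P \<theta> h) (\<lambda>u. G u \<bullet> h)" for h
    using QG unfolding quantile_gradient_iff by auto
  then have "has_L2_derivative lborel01 (quantile_increment P \<theta> h) (\<lambda>u. G (cdf (P \<theta>) (quantile (P \<theta>) u)) \<bullet> h)" for h
    by (subst has_L2_derivative_cong[where g'="\<lambda>u. G u \<bullet> h"]) (simp_all add: \<theta>.cdf_quantile)
  then show ?thesis
    unfolding transport_linearization_iff by simp
qed

lemma transport_linearization_AE_eq_quantile_gradient:
  assumes TL: "transport_linearization TYPE('p) \<Theta> P \<theta> \<Phi>" and QG: "quantile_gradient P \<theta> G"
  shows "AE u in lborel01. \<Phi> (quantile (P \<theta>) u) = G u"
proof -
  have [measurable]: "\<Phi> \<in> borel_measurable borel" "G \<in> borel_measurable lborel01"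
    using TL QG borel_measurable_lborel01
    unfolding transport_linearization_iff quantile_gradient_iff by auto
  have "AE u in lborel01. \<Phi> (quantile (P \<theta>) u) \<bullet> axis i 1 = G u \<bullet> axis i 1" for i
  proof (rule has_L2_derivative_AE_unique)
    show "\<forall>\<^sub>F t in at 0. quantile_increment P \<theta> (axis i 1) t \<in> borel_measurable lborel01"
      using eventually_quantile_increment_square_integrable[of "axis i 1"] by (rule eventually_mono) simp
  qed (use TL QG in \<open>auto simp: transport_linearization_iff quantile_gradient_iff\<close>)
  then have "AE u in lborel01. \<forall>i\<in>UNIV. \<Phi> (quantile (P \<theta>) u) $ i = G u $ i"
    by (subst AE_finite_all) (simp_all add: inner_axis)
  then show ?thesis
    by eventually_elim (simp add: vec_eq_iff)
qed

lemma wass_info_eq_quantile_gradient_integral: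
  assumes TL: "transport_linearization TYPE('p) \<Theta> P \<theta> \<Phi>" and QG: "quantile_gradient P \<theta> G"
  shows "wass_info (P \<theta>) \<Phi> = (\<chi> i j. \<integral>u. G u $ i * G u $ j \<partial>(restrict_space lborel {0..1}))"
proof -
  have [measurable]: "\<Phi> \<in> borel_measurable borel" "G \<in> borel_measurable borel"
    "G \<in> borel_measurable lborel01"
    using TL QG borel_measurable_lborel01
    unfolding transport_linearization_iff quantile_gradient_iff by auto
  have "(\<integral>x. \<Phi> x $ i * \<Phi> x $ j \<partial>P \<theta>) = (\<integral>u. \<Phi> (quantile (P \<theta>) u) $ i * \<Phi> (quantile (P \<theta>) u) $ j \<partial>lborel01)"
    for i j by (rule \<theta>.integral_quantile) measurable
  also have "\<dots> i j = (\<integral>u. G u $ i * G u $ j \<partial>lborel01)" for i j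
  proof (rule integral_cong_AE)
    show "AE u in lborel01. \<Phi> (quantile (P \<theta>) u) $ i * \<Phi> (quantile (P \<theta>) u) $ j = G u $ i * G u $ j"
      using transport_linearization_AE_eq_quantile_gradient[OF TL QG] by eventually_elim simp
  qed measurable
  also have "\<dots> i j = (\<integral>u. G u $ i * G u $ j \<partial>(restrict_space lborel {0..1}))" for i j
    by (rule integral_restrict_Icc01_eq_lborel01[symmetric]) measurable
  finally show ?thesis
    unfolding wass_info_def by simp
qed

end

theorem lemma6p8:
  fixes \<Theta> :: "(real^'p::finite) set" and P :: "real^'p \<Rightarrow> real measure" and \<theta> :: "real^'p"
  assumes "open \<Theta>" and "\<forall>\<eta>\<in>\<Theta>. P2ac (P \<eta>)" and "\<theta> \<in> \<Theta>"
  shows "(DWS \<Theta> P \<theta> \<longleftrightarrow> (\<exists>G. quantile_gradient P \<theta> G)) \<and>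
         (\<forall>\<Phi> G. transport_linearization TYPE('p) \<Theta> P \<theta> \<Phi> \<longrightarrow> quantile_gradient P \<theta> G \<longrightarrow>
            wass_info (P \<theta>) \<Phi> = (\<chi> i j. \<integral>u. G u $ i * G u $ j \<partial>(restrict_space lborel {0..1})))"
proof -
  interpret P2ac_model \<Theta> P \<theta>
    using assms by unfold_locales auto
  show ?thesis
    unfolding DWS_def
    using quantile_gradient_of_transport_linearization transport_linearization_of_quantile_gradient
      wass_info_eq_quantile_gradient_integral by blast
qed

end
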